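(* Let $\Theta$ be a well-formed System $\mathsf{F_\wedge}$ context, $S$ an $\mathsf{F_\wedge}$ type over $\Theta$, and $T,T'$ $\mathsf{F_\wedge}$ types over $\Theta, X <: S$. If $\Theta, X <: S \vdash T <: T'$, then $\Theta \vdash \forall X.\,T[X \wedge S/X] <: \forall X.\,T'[X \wedge S/X]$.
   Context: System $\mathsf{F_\wedge}$: raw types $T ::= \top \mid X \mid T \to T \mid \forall X.T \mid T \wedge T$ ($X$ ranging over type variables), identified up to $\alpha$-conversion; $\forall X.T$ abbreviates $\forall (X<:\top).T$. A context $\Theta$ is a finite sequence of assumptions $X <: T$ (type variable with bound $T$) or $x : T$ (term variable of type $T$), with distinct variables, each type being well-formed (free type variables declared earlier) over the preceding part. Subtyping judgements $\Theta \vdash S <: T$ are generated by: (Var) $\Theta, X<:T, \Theta' \vdash X <: T$; (Top) $\Theta \vdash T <: \top$; (Refl) $\Theta \vdash T <: T$; (Trans) from $\Theta\vdash T<:T'$ and $\Theta \vdash T' <: T''$ infer $\Theta \vdash T <: T''$; ($\to$) from $\Theta \vdash S' <: S$ and $\Theta \vdash T <: T'$ infer $\Theta \vdash S \to T <: S' \to T'$; ($\forall$) from $\Theta, X <: \top \vdash S <: T$ infer $\Theta \vdash \forall X.S <: \forall X.T$; (meet) $\Theta \vdash S \wedge S' <: S$, $\Theta \vdash S\wedge S' <: S'$, and from $\Theta \vdash T <: S$ and $\Theta \vdash T <: S'$ infer $\Theta \vdash T <: S \wedge S'$. $T[U/X]$ denotes capture-avoiding substitution. *)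

theory Defs
  imports Main
begin

text \<open>System F-meet with de Bruijn indices (types identified up to alpha-conversion).
  Index i refers to the i-th binding of the context counted from the most recent one
  (term-variable bindings also occupy a position, as in the POPLmark encodings).
  A universal type abbreviates a quantifier bounded by Top, so All carries only the body.\<close>

datatype ty = Top | TVar nat | Arr ty ty | All ty | Meet ty ty

datatype binding = VarB ty | TVarB ty

type_synonym env = "binding list"

definition lift_ren :: "(nat \<Rightarrow> nat) \<Rightarrow> nat \<Rightarrow> nat" where
  "lift_ren \<rho> i = (case i of 0 \<Rightarrow> 0 | Suc j \<Rightarrow> Suc (\<rho> j))"

fun ren :: "(nat \<Rightarrow> nat) \<Rightarrow> ty \<Rightarrow> ty" where
  "ren \<rho> Top = Top"
| "ren \<rho> (TVar i) = TVar (\<rho> i)"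
| "ren \<rho> (Arr S T) = Arr (ren \<rho> S) (ren \<rho> T)"
| "ren \<rho> (All T) = All (ren (lift_ren \<rho>) T)"
| "ren \<rho> (Meet S T) = Meet (ren \<rho> S) (ren \<rho> T)"

definition shift :: "nat \<Rightarrow> ty \<Rightarrow> ty" where
  "shift n T = ren (\<lambda>i. i + n) T"

definition lift_sub :: "(nat \<Rightarrow> ty) \<Rightarrow> nat \<Rightarrow> ty" where
  "lift_sub \<sigma> i = (case i of 0 \<Rightarrow> TVar 0 | Suc j \<Rightarrow> shift 1 (\<sigma> j))"

fun tsubst :: "(nat \<Rightarrow> ty) \<Rightarrow> ty \<Rightarrow> ty" where
  "tsubst \<sigma> Top = Top"
| "tsubst \<sigma> (TVar i) = \<sigma> i"
| "tsubst \<sigma> (Arr S T) = Arr (tsubst \<sigma> S) (tsubst \<sigma> T)"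
| "tsubst \<sigma> (All T) = All (tsubst (lift_sub \<sigma>) T)"
| "tsubst \<sigma> (Meet S T) = Meet (tsubst \<sigma> S) (tsubst \<sigma> T)"

fun is_TVarB :: "binding \<Rightarrow> bool" where
  "is_TVarB (TVarB _) = True"
| "is_TVarB (VarB _) = False"

fun wf_ty :: "env \<Rightarrow> ty \<Rightarrow> bool" where
  "wf_ty \<Gamma> Top = True"
| "wf_ty \<Gamma> (TVar i) = (i < length \<Gamma> \<and> is_TVarB (\<Gamma> ! i))"
| "wf_ty \<Gamma> (Arr S T) = (wf_ty \<Gamma> S \<and> wf_ty \<Gamma> T)"
| "wf_ty \<Gamma> (All T) = wf_ty (TVarB Top # \<Gamma>) T"
| "wf_ty \<Gamma> (Meet S T) = (wf_ty \<Gamma> S \<and> wf_ty \<Gamma> T)"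

inductive wf_env :: "env \<Rightarrow> bool" where
  wf_Nil: "wf_env []"
| wf_TVarB: "wf_env \<Gamma> \<Longrightarrow> wf_ty \<Gamma> T \<Longrightarrow> wf_env (TVarB T # \<Gamma>)"
| wf_VarB: "wf_env \<Gamma> \<Longrightarrow> wf_ty \<Gamma> T \<Longrightarrow> wf_env (VarB T # \<Gamma>)"

text \<open>Subtyping judgement. In rule Var the bound U lives in the context after dropping the
  first Suc i bindings, hence it is shifted by Suc i.\<close>
inductive sub :: "env \<Rightarrow> ty \<Rightarrow> ty \<Rightarrow> bool" where
  SA_Var: "i < length \<Gamma> \<Longrightarrow> \<Gamma> ! i = TVarB U \<Longrightarrow> sub \<Gamma> (TVar i) (shift (Suc i) U)"
| SA_Top: "sub \<Gamma> T Top"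
| SA_Refl: "sub \<Gamma> T T"
| SA_Trans: "sub \<Gamma> T T' \<Longrightarrow> sub \<Gamma> T' T'' \<Longrightarrow> sub \<Gamma> T T''"
| SA_Arr: "sub \<Gamma> S' S \<Longrightarrow> sub \<Gamma> T T' \<Longrightarrow> sub \<Gamma> (Arr S T) (Arr S' T')"
| SA_All: "sub (TVarB Top # \<Gamma>) S T \<Longrightarrow> sub \<Gamma> (All S) (All T)"
| SA_Meet1: "sub \<Gamma> (Meet S S') S"
| SA_Meet2: "sub \<Gamma> (Meet S S') S'"
| SA_Meet: "sub \<Gamma> T S \<Longrightarrow> sub \<Gamma> T S' \<Longrightarrow> sub \<Gamma> T (Meet S S')"

text \<open>The substitution [X meet S / X] for the innermost variable X, where the result body is
  placed under a new binder X (bound Top) over context Theta; S (over Theta) is weakened by one.\<close>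
definition meet_sub :: "ty \<Rightarrow> nat \<Rightarrow> ty" where
  "meet_sub S i = (if i = 0 then Meet (TVar 0) (shift 1 S) else TVar i)"

end

theory Submission
  imports Defs
begin

text \<open>Subtyping is stable under every substitution that sends each bounded variable
  \<open>X\<^sub>i <: U\<close> to a subtype of the substituted bound; the proof is a rule induction whose only
  interesting cases are Var (the hypothesis) and the quantifier rule (go under the binder,
  which needs weakening, itself the analogous statement for renamings). The substitution
  \<open>X \<mapsto> X \<and> S\<close> from \<open>\<Theta>, X <: S\<close> to \<open>\<Theta>, X <: \<top>\<close> qualifies, since \<open>X \<and> S <: S\<close> by the
  meet rule; one application of the quantifier rule finishes the proof.\<close>

lemma lift_ren_comp: "lift_ren (\<rho>1 \<circ> \<rho>2) = lift_ren \<rho>1 \<circ> lift_ren \<rho>2"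
  by (rule ext) (simp add: lift_ren_def split: nat.splits)

lemma ren_ren: "ren \<rho>1 (ren \<rho>2 T) = ren (\<rho>1 \<circ> \<rho>2) T"
  by (induction T arbitrary: \<rho>1 \<rho>2) (simp_all add: lift_ren_comp)

lemma lift_sub_comp_lift_ren: "lift_sub \<sigma> \<circ> lift_ren \<rho> = lift_sub (\<sigma> \<circ> \<rho>)"
  by (rule ext) (simp add: lift_ren_def lift_sub_def split: nat.splits)

lemma tsubst_ren: "tsubst \<sigma> (ren \<rho> T) = tsubst (\<sigma> \<circ> \<rho>) T"
  by (induction T arbitrary: \<sigma> \<rho>) (simp_all add: lift_sub_comp_lift_ren)

lemma shift_shift: "shift a (shift b T) = shift (a + b) T"
proof -
  have "(\<lambda>i. i + a) \<circ> (\<lambda>i. i + b) = (\<lambda>i. i + (a + b))" by (rule ext) simp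
  then show ?thesis by (simp add: shift_def ren_ren)
qed

lemma ren_lift_ren_shift1: "ren (lift_ren \<rho>) (shift 1 T) = shift 1 (ren \<rho> T)"
proof -
  have "lift_ren \<rho> \<circ> (\<lambda>i. i + 1) = (\<lambda>i. i + 1) \<circ> \<rho>"
    by (rule ext) (simp add: lift_ren_def)
  then show ?thesis by (simp add: shift_def ren_ren)
qed

lemma ren_comp_lift_sub: "ren (lift_ren \<rho>) \<circ> lift_sub \<sigma> = lift_sub (ren \<rho> \<circ> \<sigma>)"
proof (rule ext)
  fix i
  show "(ren (lift_ren \<rho>) \<circ> lift_sub \<sigma>) i = lift_sub (ren \<rho> \<circ> \<sigma>) i"
    by (cases i) (simp_all add: lift_sub_def lift_ren_def ren_lift_ren_shift1 del: One_nat_def)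
qed

lemma ren_tsubst: "ren \<rho> (tsubst \<sigma> T) = tsubst (ren \<rho> \<circ> \<sigma>) T"
  by (induction T arbitrary: \<sigma> \<rho>) (simp_all add: ren_comp_lift_sub)

lemma tsubst_lift_sub_shift1: "tsubst (lift_sub \<sigma>) (shift 1 T) = shift 1 (tsubst \<sigma> T)"
proof -
  have "lift_sub \<sigma> \<circ> (\<lambda>i. i + 1) = ren (\<lambda>i. i + 1) \<circ> \<sigma>"
    by (rule ext) (simp add: lift_sub_def shift_def)
  then show ?thesis by (simp add: shift_def tsubst_ren ren_tsubst)
qed

lemma lift_sub_TVar: "lift_sub (TVar \<circ> \<rho>) = TVar \<circ> lift_ren \<rho>"
  by (rule ext) (simp add: lift_ren_def lift_sub_def shift_def split: nat.splits)

lemma tsubst_TVar: "tsubst (TVar \<circ> \<rho>) T = ren \<rho> T"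
  by (induction T arbitrary: \<rho>) (simp_all add: lift_sub_TVar)

definition ren_respects_bounds :: "(nat \<Rightarrow> nat) \<Rightarrow> env \<Rightarrow> env \<Rightarrow> bool" where
  "ren_respects_bounds \<rho> \<Gamma> \<Delta> \<longleftrightarrow>
    (\<forall>i U. i < length \<Gamma> \<longrightarrow> \<Gamma> ! i = TVarB U \<longrightarrow>
      (\<exists>U'. \<rho> i < length \<Delta> \<and> \<Delta> ! \<rho> i = TVarB U' \<and>
            ren \<rho> (shift (Suc i) U) = shift (Suc (\<rho> i)) U'))"

definition subst_respects_bounds :: "(nat \<Rightarrow> ty) \<Rightarrow> env \<Rightarrow> env \<Rightarrow> bool" where
  "subst_respects_bounds \<sigma> \<Gamma> \<Delta> \<longleftrightarrow>
    (\<forall>i U. i < length \<Gamma> \<longrightarrow> \<Gamma> ! i = TVarB U \<longrightarrow>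
      sub \<Delta> (\<sigma> i) (tsubst \<sigma> (shift (Suc i) U)))"

lemma ren_respects_bounds_lift:
  assumes "ren_respects_bounds \<rho> \<Gamma> \<Delta>"
  shows "ren_respects_bounds (lift_ren \<rho>) (TVarB Top # \<Gamma>) (TVarB Top # \<Delta>)"
  unfolding ren_respects_bounds_def
proof (intro allI impI)
  fix i U
  assume i: "i < length (TVarB Top # \<Gamma>)" and bound: "(TVarB Top # \<Gamma>) ! i = TVarB U"
  show "\<exists>U'. lift_ren \<rho> i < length (TVarB Top # \<Delta>) \<and>
          (TVarB Top # \<Delta>) ! lift_ren \<rho> i = TVarB U' \<and>
          ren (lift_ren \<rho>) (shift (Suc i) U) = shift (Suc (lift_ren \<rho> i)) U'"
  proof (cases i)
    case 0
    then show ?thesis using bound by (simp add: lift_ren_def shift_def)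
  next
    case (Suc j)
    with i bound assms obtain U' where "\<rho> j < length \<Delta>" "\<Delta> ! \<rho> j = TVarB U'"
      and ren_bound: "ren \<rho> (shift (Suc j) U) = shift (Suc (\<rho> j)) U'"
      by (auto simp: ren_respects_bounds_def)
    moreover have "ren (lift_ren \<rho>) (shift (Suc i) U) = shift 1 (ren \<rho> (shift (Suc j) U))"
      using Suc ren_lift_ren_shift1[of \<rho> "shift (Suc j) U"] by (simp add: shift_shift)
    ultimately show ?thesis using Suc by (simp add: lift_ren_def shift_shift)
  qed
qed

lemma sub_ren:
  assumes "sub \<Gamma> A B" and "ren_respects_bounds \<rho> \<Gamma> \<Delta>"
  shows "sub \<Delta> (ren \<rho> A) (ren \<rho> B)"
  using assms
proof (induction arbitrary: \<rho> \<Delta> rule: sub.induct)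
  case (SA_Var i \<Gamma> U)
  then obtain U' where "\<rho> i < length \<Delta>" "\<Delta> ! \<rho> i = TVarB U'"
    and "ren \<rho> (shift (Suc i) U) = shift (Suc (\<rho> i)) U'"
    by (auto simp: ren_respects_bounds_def)
  then show ?case by (simp add: sub.SA_Var)
next
  case (SA_Trans \<Gamma> T T' T'')
  then show ?case by (meson sub.SA_Trans)
next
  case (SA_All \<Gamma> S T)
  then show ?case by (simp add: sub.SA_All ren_respects_bounds_lift)
qed (auto intro: sub.intros)

lemma sub_weaken: "sub \<Gamma> A B \<Longrightarrow> sub (b # \<Gamma>) (shift 1 A) (shift 1 B)"
  unfolding shift_def[of 1 A] shift_def[of 1 B]
  by (rule sub_ren) (auto simp: ren_respects_bounds_def shift_def ren_ren comp_def)

lemma subst_respects_bounds_lift: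
  assumes "subst_respects_bounds \<sigma> \<Gamma> \<Delta>"
  shows "subst_respects_bounds (lift_sub \<sigma>) (TVarB Top # \<Gamma>) (TVarB Top # \<Delta>)"
  unfolding subst_respects_bounds_def
proof (intro allI impI)
  fix i U
  assume i: "i < length (TVarB Top # \<Gamma>)" and bound: "(TVarB Top # \<Gamma>) ! i = TVarB U"
  show "sub (TVarB Top # \<Delta>) (lift_sub \<sigma> i) (tsubst (lift_sub \<sigma>) (shift (Suc i) U))"
  proof (cases i)
    case 0
    then show ?thesis using bound by (simp add: shift_def sub.SA_Top)
  next
    case (Suc j)
    with i bound assms have "sub \<Delta> (\<sigma> j) (tsubst \<sigma> (shift (Suc j) U))"
      by (auto simp: subst_respects_bounds_def)
    moreover have "tsubst (lift_sub \<sigma>) (shift (Suc i) U) = shift 1 (tsubst \<sigma> (shift (Suc j) U))"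
      using Suc tsubst_lift_sub_shift1[of \<sigma> "shift (Suc j) U"] by (simp add: shift_shift)
    ultimately show ?thesis using Suc by (simp add: lift_sub_def sub_weaken del: One_nat_def)
  qed
qed

lemma sub_subst:
  assumes "sub \<Gamma> A B" and "subst_respects_bounds \<sigma> \<Gamma> \<Delta>"
  shows "sub \<Delta> (tsubst \<sigma> A) (tsubst \<sigma> B)"
  using assms
proof (induction arbitrary: \<sigma> \<Delta> rule: sub.induct)
  case (SA_Var i \<Gamma> U)
  then show ?case by (simp add: subst_respects_bounds_def)
next
  case (SA_Trans \<Gamma> T T' T'')
  then show ?case by (meson sub.SA_Trans)
next
  case (SA_All \<Gamma> S T)
  then show ?case by (simp add: sub.SA_All subst_respects_bounds_lift)
qed (auto intro: sub.intros)

lemma tsubst_meet_sub_shift: "tsubst (meet_sub S) (shift (Suc k) T) = shift (Suc k) T"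
proof -
  have "meet_sub S \<circ> (\<lambda>i. i + Suc k) = TVar \<circ> (\<lambda>i. i + Suc k)"
    by (rule ext) (simp add: meet_sub_def)
  then show ?thesis by (simp add: shift_def tsubst_ren tsubst_TVar)
qed

lemma subst_respects_bounds_meet_sub:
  "subst_respects_bounds (meet_sub S) (TVarB S # \<Theta>) (TVarB Top # \<Theta>)"
  unfolding subst_respects_bounds_def tsubst_meet_sub_shift
proof (intro allI impI)
  fix i U
  assume i: "i < length (TVarB S # \<Theta>)" and bound: "(TVarB S # \<Theta>) ! i = TVarB U"
  show "sub (TVarB Top # \<Theta>) (meet_sub S i) (shift (Suc i) U)"
  proof (cases i)
    case 0
    then show ?thesis using bound by (simp add: meet_sub_def sub.SA_Meet2)
  next
    case (Suc j)
    then show ?thesis using i bound by (simp add: meet_sub_def sub.SA_Var)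
  qed
qed

theorem lemma3p1:
  assumes "wf_env \<Theta>"
    and "wf_ty \<Theta> S"
    and "wf_ty (TVarB S # \<Theta>) T"
    and "wf_ty (TVarB S # \<Theta>) T'"
    and "sub (TVarB S # \<Theta>) T T'"
  shows "sub \<Theta> (All (tsubst (meet_sub S) T)) (All (tsubst (meet_sub S) T'))"
  using sub_subst[OF assms(5) subst_respects_bounds_meet_sub] by (rule sub.SA_All)

end
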